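(* Let $a_2,a_3$ be integers with $1<a_2<a_3$, $A=\{1,a_2,a_3\}$, and let $SG(A,n,p)$ be a stride generator. Then every break $y$ of $SG(A,n,p)$ satisfies $y\ge a_3-a_2$.
   Context: For integers $n$ and $i\ge 0$, an integer $x$ has an $n$-generation of order $i$ if there are integers $c_1,c_2\ge 0$ with $x+ia_3=c_2a_2+c_1$ and $c_1+c_2\le n+i$. For integers $n$ and $p\ge0$, $SG(A,n,p)$ is a stride generator if: (A) every integer $0\le x<a_3$ has an $n$-generation of some order $\le p$; (B) at least one integer $0\le x<a_3$ has no $n$-generation of order $<p$; (C) at least one integer $0\le y<a_3$ has no $(n-1)$-generation of any order $\le p+1$. Any integer $0\le y<a_3$ satisfying (C) is called a break. *)

theory Defs
  imports Main
begin

definition has_gen :: "int \<Rightarrow> int \<Rightarrow> int \<Rightarrow> nat \<Rightarrow> int \<Rightarrow> bool" where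
  "has_gen a2 a3 n i x \<longleftrightarrow>
     (\<exists>c1 c2 :: int. c1 \<ge> 0 \<and> c2 \<ge> 0 \<and> x + int i * a3 = c2 * a2 + c1 \<and> c1 + c2 \<le> n + int i)"

definition stride_generator :: "int \<Rightarrow> int \<Rightarrow> int \<Rightarrow> nat \<Rightarrow> bool" where
  "stride_generator a2 a3 n p \<longleftrightarrow>
     (\<forall>x. 0 \<le> x \<and> x < a3 \<longrightarrow> (\<exists>i\<le>p. has_gen a2 a3 n i x)) \<and>
     (\<exists>x. 0 \<le> x \<and> x < a3 \<and> \<not> (\<exists>i<p. has_gen a2 a3 n i x)) \<and>
     (\<exists>y. 0 \<le> y \<and> y < a3 \<and> \<not> (\<exists>i\<le>p+1. has_gen a2 a3 (n-1) i y))"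

definition is_break :: "int \<Rightarrow> int \<Rightarrow> int \<Rightarrow> nat \<Rightarrow> int \<Rightarrow> bool" where
  "is_break a2 a3 n p y \<longleftrightarrow>
     0 \<le> y \<and> y < a3 \<and> \<not> (\<exists>i\<le>p+1. has_gen a2 a3 (n-1) i y)"

end

theory Submission
  imports Defs
begin

text \<open>If \<open>y + a\<^sub>2 < a\<^sub>3\<close>, then \<open>y + a\<^sub>2\<close> has an \<open>n\<close>-generation of some order \<open>i \<le> p\<close>.
  Deleting one summand \<open>a\<^sub>2\<close> from it (or, when no \<open>a\<^sub>2\<close> is used, \<open>a\<^sub>2 \<ge> 1\<close> summands \<open>1\<close>)
  leaves an \<open>(n - 1)\<close>-generation of \<open>y\<close> of the same order, so \<open>y\<close> is no break.\<close>

lemma has_gen_diff_one_of_has_gen_add: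
  fixes a2 a3 n x :: int
  assumes "1 \<le> a2" and "0 \<le> a3" and "0 \<le> x"
    and "has_gen a2 a3 n i (x + a2)"
  shows "has_gen a2 a3 (n - 1) i x"
proof -
  obtain c1 c2 :: int where c: "c1 \<ge> 0" "c2 \<ge> 0"
    "x + a2 + int i * a3 = c2 * a2 + c1" "c1 + c2 \<le> n + int i"
    using assms(4) unfolding has_gen_def by blast
  show ?thesis
  proof (cases "c2 = 0")
    case True
    have "0 \<le> int i * a3" using assms(2) by simp
    then have "x + int i * a3 = 0 * a2 + (c1 - a2)" "0 \<le> c1 - a2"
      using c(3) True assms(3) by simp_all
    with c(4) True assms(1) show ?thesis
      unfolding has_gen_def by (intro exI[of _ "c1 - a2"] exI[of _ 0]) auto
  next
    case False
    have "x + int i * a3 = (c2 - 1) * a2 + c1"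
      using c(3) by (simp add: algebra_simps)
    with c False show ?thesis
      unfolding has_gen_def by (intro exI[of _ c1] exI[of _ "c2 - 1"]) auto
  qed
qed

text \<open>Only condition (A) of a stride generator is needed.\<close>

theorem lemma1:
  fixes a2 a3 n y :: int and p :: nat
  assumes "1 < a2" and "a2 < a3"
    and "stride_generator a2 a3 n p"
    and "is_break a2 a3 n p y"
  shows "y \<ge> a3 - a2"
proof (rule ccontr)
  assume "\<not> y \<ge> a3 - a2"
  then have "0 \<le> y + a2" "y + a2 < a3"
    using assms(1,4) unfolding is_break_def by auto
  then obtain i where "i \<le> p" "has_gen a2 a3 n i (y + a2)"
    using assms(3) unfolding stride_generator_def by blast
  moreover have "0 \<le> y" using assms(4) unfolding is_break_def by simp
  ultimately have "has_gen a2 a3 (n - 1) i y" "i \<le> p + 1"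
    using assms(1,2) has_gen_diff_one_of_has_gen_add[of a2 a3 y n i] by simp_all
  with assms(4) show False unfolding is_break_def by blast
qed

end
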